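(* Let $G$ be a compact group, $g\mapsto U_g$ an irreducible unitary representation of $G$ on a finite-dimensional Hilbert space $\mathcal{H}$, and $\mathcal{L}$ a $UU$-covariant Lindbladian on $\mathcal{H}$. Then the dynamical semigroup $\mathcal{A}_t=e^{t\mathcal{L}}$ is unital for every $t\ge0$, i.e. $\mathcal{A}_t(I)=I$, and $\mathcal{L}(I)=0$.
   Context: A Lindbladian has GKSL form and generates the CPTP semigroup $(e^{t\mathcal{L}})_{t\ge0}$. $\mathcal{L}$ is $UU$-covariant if $\mathcal{L}(U_gAU_g^\dagger)=U_g\mathcal{L}(A)U_g^\dagger$ for all operators $A$ on $\mathcal{H}$ and all $g\in G$. *)

theory Defs
  imports "HOL-Analysis.Analysis" "HOL-Algebra.Group"
begin

text \<open>Operators on the finite-dimensional Hilbert space H = C^'n are complex matrices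
  of type complex^'n^'n, with matrix product (**) and identity (mat 1).\<close>

definition adj :: "complex^'n^'n \<Rightarrow> complex^'n^'n" where
  "adj A = (\<chi> i j. cnj (A $ j $ i))"

definition unitary_mat :: "complex^'n^'n \<Rightarrow> bool" where
  "unitary_mat V \<longleftrightarrow> adj V ** V = mat 1 \<and> V ** adj V = mat 1"

definition complex_subspace :: "(complex^'n) set \<Rightarrow> bool" where
  "complex_subspace W \<longleftrightarrow> 0 \<in> W \<and> (\<forall>v\<in>W. \<forall>w\<in>W. v + w \<in> W)
     \<and> (\<forall>c::complex. \<forall>v\<in>W. c *s v \<in> W)"

definition compact_group :: "('g, 'b) monoid_scheme \<Rightarrow> 'g topology \<Rightarrow> bool" where
  "compact_group G T \<longleftrightarrow> group G \<and> topspace T = carrier G \<and> compact_space T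
     \<and> Hausdorff_space T
     \<and> continuous_map (prod_topology T T) T (\<lambda>(x, y). x \<otimes>\<^bsub>G\<^esub> y)
     \<and> continuous_map T T (\<lambda>x. inv\<^bsub>G\<^esub> x)"

definition unitary_rep ::
  "('g, 'b) monoid_scheme \<Rightarrow> 'g topology \<Rightarrow> ('g \<Rightarrow> complex^'n^'n) \<Rightarrow> bool" where
  "unitary_rep G T U \<longleftrightarrow>
     (\<forall>g\<in>carrier G. unitary_mat (U g))
     \<and> (\<forall>g\<in>carrier G. \<forall>h\<in>carrier G. U (g \<otimes>\<^bsub>G\<^esub> h) = U g ** U h)
     \<and> U \<one>\<^bsub>G\<^esub> = mat 1
     \<and> continuous_map T euclidean U"

definition irreducible_rep ::
  "('g, 'b) monoid_scheme \<Rightarrow> ('g \<Rightarrow> complex^'n^'n) \<Rightarrow> bool" where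
  "irreducible_rep G U \<longleftrightarrow>
     (\<forall>W. complex_subspace W \<and> (\<forall>g\<in>carrier G. \<forall>v\<in>W. U g *v v \<in> W)
        \<longrightarrow> W = {0} \<or> W = UNIV)"

text \<open>GKSL (Lindblad) form: L(A) = -i[H,A] + sum_k (L_k A L_k^* - 1/2 {L_k^* L_k, A})
  (scalars c written as mat c **) with H Hermitian and finitely many jump operators L_k.\<close>
definition lindbladian :: "(complex^'n^'n \<Rightarrow> complex^'n^'n) \<Rightarrow> bool" where
  "lindbladian L \<longleftrightarrow> (\<exists>H Ls. adj H = H \<and>
     (\<forall>A. L A = mat (- \<i>) ** (H ** A - A ** H)
        + (\<Sum>K\<leftarrow>Ls. K ** A ** adj K
             - mat (1/2 :: complex) ** (adj K ** K ** A + A ** (adj K ** K)))))"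

definition UU_covariant ::
  "('g, 'b) monoid_scheme \<Rightarrow> ('g \<Rightarrow> complex^'n^'n) \<Rightarrow> (complex^'n^'n \<Rightarrow> complex^'n^'n) \<Rightarrow> bool" where
  "UU_covariant G U L \<longleftrightarrow>
     (\<forall>g\<in>carrier G. \<forall>A. L (U g ** A ** adj (U g)) = U g ** L A ** adj (U g))"

definition dyn_semigroup ::
  "(complex^'n^'n \<Rightarrow> complex^'n^'n) \<Rightarrow> real \<Rightarrow> complex^'n^'n \<Rightarrow> complex^'n^'n" where
  "dyn_semigroup L t A = (\<Sum>k. (t ^ k / fact k) *\<^sub>R (L ^^ k) A)"

end

theory Submission imports Defs "Jordan_Normal_Form.Char_Poly" begin

text \<open>Covariance together with unitarity of each \<open>U g\<close> makes \<open>L I\<close> commute with the whole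
  representation, so by Schur's lemma \<open>L I = c I\<close>. A Lindbladian in GKSL form is trace
  annihilating, \<open>tr (L A) = 0\<close>, hence \<open>c = 0\<close>. Then every term \<open>t^k/k! L^k I\<close> with \<open>k \<ge> 1\<close> of the
  exponential series vanishes and \<open>e^{tL} I = I\<close>.\<close>

lemma complex_mat_has_eigenvector:
  fixes A :: "complex Matrix.mat"
  assumes "A \<in> carrier_mat n n" and "0 < n"
  shows "\<exists>k v. eigenvector A v k"
proof -
  have "degree (char_poly A) = n"
    using degree_monic_char_poly[OF assms(1)] by simp
  then have "\<not> constant (poly (char_poly A))"
    using assms(2) constant_degree[of "char_poly A"] by simp
  then obtain k where "poly (char_poly A) k = 0"
    using fundamental_theorem_of_algebra by blast
  then have "eigenvalue A k"
    using eigenvalue_root_char_poly[OF assms(1)] by simp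
  then show ?thesis
    unfolding eigenvalue_def by blast
qed

text \<open>Transported from Jordan-Normal-Form matrices along an enumeration \<open>f\<close> of the index type.\<close>

lemma complex_matrix_has_eigenvector:
  fixes M :: "complex^'n::finite^'n"
  shows "\<exists>k (x::complex^'n). x \<noteq> 0 \<and> M *v x = k *s x"
proof -
  define n where "n = CARD('n)"
  obtain f where f: "bij_betw f {0..<n} (UNIV::'n set)"
    using ex_bij_betw_nat_finite[of "UNIV::'n set"] unfolding n_def by auto
  define g where "g = inv_into {0..<n} f"
  have gf: "g (f i) = i" if "i < n" for i
    unfolding g_def using f that by (simp add: bij_betw_inv_into_left)
  have fg: "f (g a) = a" for a
    unfolding g_def using f by (simp add: bij_betw_inv_into_right)
  have g_less: "g a < n" for a
    unfolding g_def using f by (metis atLeastLessThan_iff bij_betw_def inv_into_into UNIV_I)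
  define A where "A = Matrix.mat n n (\<lambda>(i, j). M $ f i $ f j)"
  have A: "A \<in> carrier_mat n n"
    unfolding A_def by simp
  obtain k v where "eigenvector A v k"
    using complex_mat_has_eigenvector[OF A] unfolding n_def by auto
  then have v: "v \<in> carrier_vec n" "v \<noteq> 0\<^sub>v n" "A *\<^sub>v v = k \<cdot>\<^sub>v v"
    using A unfolding eigenvector_def by auto
  define x where "x = (\<chi> a. vec_index v (g a))"
  have x_f: "x $ f i = vec_index v i" if "i < n" for i
    unfolding x_def using gf that by simp
  have "x \<noteq> 0"
  proof
    assume "x = 0"
    then have "vec_index v i = 0" if "i < n" for i
      using x_f that by (metis zero_index)
    then have "v = 0\<^sub>v n"
      using v(1) by (intro eq_vecI) auto
    with v(2) show False ..
  qed
  moreover have "(M *v x) $ a = (k *s x) $ a" for a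
  proof -
    have "(M *v x) $ a = (\<Sum>j\<in>{0..<n}. M $ a $ f j * x $ f j)"
      using sum.reindex_bij_betw[OF f, of "\<lambda>b. M $ a $ b * x $ b"]
      by (simp add: matrix_vector_mult_def)
    also have "\<dots> = (\<Sum>j\<in>{0..<n}. M $ a $ f j * vec_index v j)"
      by (rule sum.cong) (simp_all add: x_f)
    also have "\<dots> = vec_index (A *\<^sub>v v) (g a)"
      using A g_less v(1) fg by (simp add: scalar_prod_def A_def mult.commute)
    also have "\<dots> = (k *s x) $ a"
      using v g_less by (simp add: x_def)
    finally show ?thesis .
  qed
  ultimately show ?thesis
    by (metis Finite_Cartesian_Product.vec_eq_iff)
qed

hide_const (open) Matrix.mat

lemma complex_subspace_eigenspace:
  "complex_subspace {y. M *v y = k *s (y :: complex^'n::finite)}"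
  unfolding complex_subspace_def
  by (simp add: matrix_vector_right_distrib vector_add_ldistrib vector_scalar_commute
      vector_smult_assoc mult.commute)

lemma matrix_vector_mul_mat: "mat k *v y = k *s (y :: 'a::semiring_1^'n::finite)"
  by (simp add: Finite_Cartesian_Product.vec_eq_iff matrix_vector_mult_def
      Finite_Cartesian_Product.mat_def if_distrib if_distribR cong: if_cong)

lemma irreducible_rep_commutant_scalar:
  fixes U :: "'g \<Rightarrow> complex^'n::finite^'n"
  assumes irr: "irreducible_rep G U"
    and comm: "\<forall>g\<in>carrier G. U g ** M = M ** U g"
  shows "\<exists>c. M = mat c"
proof -
  obtain k x where x: "x \<noteq> 0" "M *v x = k *s x"
    using complex_matrix_has_eigenvector by blast
  define W where "W = {y. M *v y = k *s y}"
  have "U g *v y \<in> W" if "g \<in> carrier G" "y \<in> W" for g y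
  proof -
    have "M *v (U g *v y) = (U g ** M) *v y"
      using comm that(1) by (simp add: matrix_vector_mul_assoc)
    also have "\<dots> = k *s (U g *v y)"
      using that(2) by (simp add: W_def vector_scalar_commute flip: matrix_vector_mul_assoc)
    finally show ?thesis
      by (simp add: W_def)
  qed
  then have "W = {0} \<or> W = UNIV"
    using irr complex_subspace_eigenspace unfolding irreducible_rep_def W_def by blast
  moreover have "x \<in> W"
    using x by (simp add: W_def)
  ultimately have "M *v y = mat k *v y" for y
    using x by (auto simp: W_def matrix_vector_mul_mat)
  then show ?thesis
    using matrix_eq by blast
qed

lemma UU_covariant_commutes_L_one:
  assumes "UU_covariant G U L" and "g \<in> carrier G" and "unitary_mat (U g)"
  shows "U g ** L (mat 1) = L (mat 1) ** U g"
proof -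
  have unit: "adj (U g) ** U g = mat 1" "U g ** adj (U g) = mat 1"
    using assms(3) unfolding unitary_mat_def by auto
  have "L (mat 1) = U g ** L (mat 1) ** adj (U g)"
    using assms(1,2) unit(2) unfolding UU_covariant_def by (metis matrix_mul_rid)
  then have "L (mat 1) ** U g = U g ** L (mat 1) ** (adj (U g) ** U g)"
    by (metis matrix_mul_assoc)
  then show ?thesis
    using unit(1) by simp
qed

lemma trace_sum_list:
  "trace (\<Sum>x\<leftarrow>xs. f x :: 'a::comm_semiring_1^'n::finite^'n) = (\<Sum>x\<leftarrow>xs. trace (f x))"
  by (induction xs) (simp_all add: trace_def sum.distrib)

lemma trace_mat_mult_left: "trace (mat c ** A) = c * trace (A :: 'a::comm_semiring_1^'n::finite^'n)"
  by (simp add: trace_def matrix_matrix_mult_def Finite_Cartesian_Product.mat_def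
      if_distrib if_distribR sum_distrib_left cong: if_cong)

lemma trace_mat: "trace (mat c :: 'a::semiring_1^'n::finite^'n) = of_nat CARD('n) * c"
  by (simp add: trace_def Finite_Cartesian_Product.mat_def)

lemma trace_lindbladian:
  assumes "lindbladian L"
  shows "trace (L A) = 0"
proof -
  obtain H Ls where L: "\<And>A. L A = mat (- \<i>) ** (H ** A - A ** H)
      + (\<Sum>K\<leftarrow>Ls. K ** A ** adj K
           - mat (1/2 :: complex) ** (adj K ** K ** A + A ** (adj K ** K)))"
    using assms unfolding lindbladian_def by blast
  have "trace (H ** A - A ** H) = 0"
    by (simp add: trace_sub trace_mul_sym[of H])
  moreover have "trace (K ** A ** adj K) = trace (adj K ** K ** A)" for K
    by (metis trace_mul_sym matrix_mul_assoc)
  moreover have "trace (A ** (adj K ** K)) = trace (adj K ** K ** A)" for K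
    by (rule trace_mul_sym)
  ultimately show ?thesis
    by (simp add: L trace_add trace_sub trace_sum_list trace_mat_mult_left)
qed

lemma lindbladian_zero: "lindbladian L \<Longrightarrow> L 0 = 0"
  by (auto simp: lindbladian_def)

lemma dyn_semigroup_kernel:
  assumes "L 0 = 0" and "L A = 0"
  shows "dyn_semigroup L t A = A"
proof -
  have higher: "(L ^^ Suc k) A = 0" for k
    by (induction k) (simp_all add: assms)
  have "(\<lambda>k. (t ^ k / fact k) *\<^sub>R (L ^^ k) A) = (\<lambda>k. if k = 0 then A else 0)"
  proof
    show "(t ^ k / fact k) *\<^sub>R (L ^^ k) A = (if k = 0 then A else 0)" for k
      using higher by (cases k) simp_all
  qed
  then show ?thesis
    unfolding dyn_semigroup_def using sums_single[of 0 "\<lambda>_. A"] sums_unique by metis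
qed

theorem lemma6:
  fixes G :: "('g, 'b) monoid_scheme" and T :: "'g topology"
    and U :: "'g \<Rightarrow> complex^'n::finite^'n"
    and L :: "complex^'n^'n \<Rightarrow> complex^'n^'n"
  assumes "compact_group G T"
    and "unitary_rep G T U"
    and "irreducible_rep G U"
    and "lindbladian L"
    and "UU_covariant G U L"
  shows "(\<forall>t\<ge>0. dyn_semigroup L t (mat 1) = mat 1) \<and> L (mat 1) = 0"
proof -
  have "\<forall>g\<in>carrier G. U g ** L (mat 1) = L (mat 1) ** U g"
    using assms(2) UU_covariant_commutes_L_one[OF assms(5)] unfolding unitary_rep_def by simp
  then obtain c where c: "L (mat 1) = mat c"
    using irreducible_rep_commutant_scalar[OF assms(3)] by blast
  have "of_nat CARD('n) * c = 0"
    using trace_lindbladian[OF assms(4), of "mat 1"] by (simp add: c trace_mat)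
  then have L_one: "L (mat 1) = 0"
    by (simp add: c)
  then show ?thesis
    using dyn_semigroup_kernel[OF lindbladian_zero[OF assms(4)] L_one] by simp
qed

end
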